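(* Let $H$ be a finite, connected, $d$-regular graph on $[n]$, let $i_0$ be a vertex of $H$, and let $j_1,\dots,j_\ell$ ($1\le\ell\le d$) be distinct neighbours of $i_0$. Then: (i) $\Phi_{\ell-1}(x_{i_0};x_{j_1},\dots,x_{j_\ell})\in\mathbb{I}(U(H))$; (ii) $\Phi_{\ell-1}(x_0;x_1,\dots,x_\ell)$ is symmetric in $x_1,\dots,x_\ell$, and its total degree in the variables $x_0,\dots,x_\ell$ is $2d-\ell+1$; (iii) if $\overline{c}\in\mathbb{C}^m$ and $u_0\in\mathbb{C}$ are such that $\Phi_{\overline{c}}(u_0,y)$ has $d$ distinct roots $u_1,\dots,u_d$, then the set of solutions $(x_1,\dots,x_d)\in\mathbb{C}^d$ of the system $\Phi_0(u_0;x_1)=\Phi_1(u_0;x_1,x_2)=\dots=\Phi_{d-1}(u_0;x_1,\dots,x_d)=0$ (coefficients specialized at $\overline{c}$) is exactly the set of all permutations of $(u_1,\dots,u_d)$.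
   Context: Let $\overline{a}=(a_{ij})_{0\le j\le i\le d}$ be $m=(d+1)(d+2)/2$ indeterminates, with $a_{ji}=a_{ij}$, and $\Phi(x,y)=\Phi_{\overline{a}}(x,y)=\sum_{i,j=0}^d a_{ij}x^iy^j$; $\Phi_{\overline{c}}$ denotes its specialization at $\overline{c}\in\mathbb{C}^m$. Define $\Phi_0(x_0;x_1)=\Phi(x_0,x_1)$ and recursively, for $\ell\ge 2$, $\Phi_{\ell-1}(x_0;x_1,\dots,x_\ell)=\dfrac{\Phi_{\ell-2}(x_0;x_1,\dots,x_{\ell-1})-\Phi_{\ell-2}(x_0;x_1,\dots,x_{\ell-2},x_\ell)}{x_\ell-x_{\ell-1}}$ (a polynomial). With $E$ the edge set of $H$: $S(H)=\{\Phi_{\overline{a}}(x_i,x_j):ij\in E\}\subseteq\mathbb{C}[\overline{a},x_1,\dots,x_n]$, $W(H)=\mathbb{V}(S(H))\subseteq\mathbb{C}^{m+n}$, $Z(H)=W(H)\cap\bigcup_{i>j}\mathbb{V}(x_i-x_j)$, $U(H)=\overline{W(H)\setminus Z(H)}$ (Zariski closure), and $\mathbb{I}(U(H))$ is the ideal of polynomials vanishing on $U(H)$. *)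

theory Defs
  imports "HOL-Library.Poly_Mapping" "HOL-Computational_Algebra.Polynomial"
    "HOL-Combinatorics.Permutations"
begin

text \<open>Variables: A i j (j \<le> i \<le> d) are the indeterminates a_ij; X k are the x-variables.\<close>
datatype var = A nat nat | X nat

type_synonym mpoly = "(var \<Rightarrow>\<^sub>0 nat) \<Rightarrow>\<^sub>0 complex"

definition Var :: "var \<Rightarrow> mpoly" where
  "Var v = Poly_Mapping.single (Poly_Mapping.single v 1) 1"

definition Const :: "complex \<Rightarrow> mpoly" where
  "Const c = Poly_Mapping.single 0 c"

text \<open>a_ij with the convention a_ji = a_ij: indeterminate A (max i j) (min i j).\<close>
definition acoef :: "nat \<Rightarrow> nat \<Rightarrow> var" where
  "acoef i j = A (max i j) (min i j)"

definition PhiPoly :: "nat \<Rightarrow> mpoly \<Rightarrow> mpoly \<Rightarrow> mpoly" where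
  "PhiPoly d p q = (\<Sum>i\<le>d. \<Sum>j\<le>d. Var (acoef i j) * p ^ i * q ^ j)"

definition psubst :: "(var \<Rightarrow> mpoly) \<Rightarrow> mpoly \<Rightarrow> mpoly" where
  "psubst \<sigma> f = (\<Sum>m\<in>Poly_Mapping.keys f.
      Const (Poly_Mapping.lookup f m) * (\<Prod>v\<in>Poly_Mapping.keys m. \<sigma> v ^ Poly_Mapping.lookup m v))"

definition peval :: "(var \<Rightarrow> complex) \<Rightarrow> mpoly \<Rightarrow> complex" where
  "peval pt f = (\<Sum>m\<in>Poly_Mapping.keys f.
      Poly_Mapping.lookup f m * (\<Prod>v\<in>Poly_Mapping.keys m. pt v ^ Poly_Mapping.lookup m v))"

text \<open>PhiF d k = Phi_k(x_0; x_1, ..., x_{k+1}) in the formal variables X 0, ..., X (k+1);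
  the division is the exact polynomial quotient.\<close>
fun PhiF :: "nat \<Rightarrow> nat \<Rightarrow> mpoly" where
  "PhiF d 0 = PhiPoly d (Var (X 0)) (Var (X 1))"
| "PhiF d (Suc k) = (THE q. q * (Var (X (k + 2)) - Var (X (k + 1)))
      = PhiF d k - psubst (Var(X (k + 1) := Var (X (k + 2)))) (PhiF d k))"

definition pvars :: "mpoly \<Rightarrow> var set" where
  "pvars f = (\<Union>m\<in>Poly_Mapping.keys f. Poly_Mapping.keys m)"

definition xdegm :: "(var \<Rightarrow>\<^sub>0 nat) \<Rightarrow> nat" where
  "xdegm m = (\<Sum>v\<in>Poly_Mapping.keys m. (case v of X _ \<Rightarrow> Poly_Mapping.lookup m v | A _ _ \<Rightarrow> 0))"

definition xdeg :: "mpoly \<Rightarrow> nat" where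
  "xdeg f = Max (xdegm ` Poly_Mapping.keys f)"

definition relvars :: "nat \<Rightarrow> nat \<Rightarrow> var set" where
  "relvars d n = {A i j | i j. j \<le> i \<and> i \<le> d} \<union> {X k | k. k \<in> {1..n}}"

text \<open>The ambient space C^(m+n), coordinates outside relvars fixed to 0.\<close>
definition Amb :: "nat \<Rightarrow> nat \<Rightarrow> (var \<Rightarrow> complex) set" where
  "Amb d n = {pt. \<forall>v. v \<notin> relvars d n \<longrightarrow> pt v = 0}"

definition polys :: "nat \<Rightarrow> nat \<Rightarrow> mpoly set" where
  "polys d n = {f. pvars f \<subseteq> relvars d n}"

definition zclos :: "nat \<Rightarrow> nat \<Rightarrow> (var \<Rightarrow> complex) set \<Rightarrow> (var \<Rightarrow> complex) set" where
  "zclos d n S = {pt \<in> Amb d n. \<forall>f\<in>polys d n.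
      (\<forall>q\<in>S. peval q f = 0) \<longrightarrow> peval pt f = 0}"

definition vanI :: "nat \<Rightarrow> nat \<Rightarrow> (var \<Rightarrow> complex) set \<Rightarrow> mpoly set" where
  "vanI d n S = {f \<in> polys d n. \<forall>pt\<in>S. peval pt f = 0}"

definition WH :: "nat \<Rightarrow> nat \<Rightarrow> (nat \<Rightarrow> nat \<Rightarrow> bool) \<Rightarrow> (var \<Rightarrow> complex) set" where
  "WH d n E = {pt \<in> Amb d n. \<forall>i j. E i j \<longrightarrow> peval pt (PhiPoly d (Var (X i)) (Var (X j))) = 0}"

definition ZH :: "nat \<Rightarrow> nat \<Rightarrow> (nat \<Rightarrow> nat \<Rightarrow> bool) \<Rightarrow> (var \<Rightarrow> complex) set" where
  "ZH d n E = {pt \<in> WH d n E. \<exists>i\<in>{1..n}. \<exists>j\<in>{1..n}. i > j \<and> pt (X i) = pt (X j)}"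

definition UH :: "nat \<Rightarrow> nat \<Rightarrow> (nat \<Rightarrow> nat \<Rightarrow> bool) \<Rightarrow> (var \<Rightarrow> complex) set" where
  "UH d n E = zclos d n (WH d n E - ZH d n E)"

definition specpt :: "(var \<Rightarrow> complex) \<Rightarrow> complex \<Rightarrow> (nat \<Rightarrow> complex) \<Rightarrow> var \<Rightarrow> complex" where
  "specpt c u0 x v = (case v of A a b \<Rightarrow> c v | X k \<Rightarrow> (if k = 0 then u0 else x k))"

definition PhiUni :: "nat \<Rightarrow> (var \<Rightarrow> complex) \<Rightarrow> complex \<Rightarrow> complex poly" where
  "PhiUni d c u0 = (\<Sum>j\<le>d. monom (\<Sum>i\<le>d. c (acoef i j) * u0 ^ i) j)"

end

theory Submission
  imports Defs "HOL-Library.Countable"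
begin

(*
  Write f(y) = Phi(x_0, y) = sum_j b_j y^j with b_j = sum_i a_ij x_0^i, and let h_m denote the
  complete homogeneous symmetric polynomial of degree m. Because
  h_(m+1)(a, S) - h_(m+1)(c, S) = (a - c) h_m(a, c, S), induction on k gives the closed form
    Phi_k(x_0; x_1, ..., x_(k+1)) = (-1)^k sum_(j >= k) b_j h_(j-k)(x_1, ..., x_(k+1)),
  i.e. up to sign the divided difference of f at x_1, ..., x_(k+1). Symmetry is then clear, and
  the only term of top x-degree is a_dd x_0^d h_(d-k), of degree 2d - k.
  The same identity shows that a divided difference of f at pairwise distinct roots of f
  vanishes. Off Z(H) the neighbours of i_0 carry distinct roots of Phi(x_(i_0), y), which
  gives (i); and it gives the 'if' part of (iii). Conversely, if x_1, ..., x_k are distinct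
  roots of f, then y |-> Phi_k(u_0; x_1, ..., x_k, y) is a polynomial of degree d - k with
  leading coefficient +-b_d that vanishes at the d - k remaining roots, so these are all its
  zeros; induction on k gives the 'only if' part of (iii).
*)

declare upt_Suc [simp del]

section \<open>Complete homogeneous symmetric polynomials\<close>

fun complete_homog :: "'a::comm_ring_1 list \<Rightarrow> nat \<Rightarrow> 'a" where
  "complete_homog [] m = (if m = 0 then 1 else 0)"
| "complete_homog (x # xs) m = (\<Sum>i\<le>m. x ^ i * complete_homog xs (m - i))"

declare complete_homog.simps(2) [simp del]

lemma complete_homog_0 [simp]: "complete_homog xs 0 = 1"
  by (induction xs) (auto simp: complete_homog.simps)

lemma complete_homog_singleton [simp]: "complete_homog [x] m = x ^ m"
proof -
  have "(\<Sum>i\<le>m. x ^ i * complete_homog [] (m - i)) = (\<Sum>i\<le>m. if i = m then x ^ i else 0)"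
    by (rule sum.cong) auto
  then show ?thesis
    by (simp add: complete_homog.simps)
qed

lemma complete_homog_Cons_Suc:
  "complete_homog (x # xs) (Suc m) = complete_homog xs (Suc m) + x * complete_homog (x # xs) m"
proof -
  have "complete_homog (x # xs) (Suc m)
      = x ^ 0 * complete_homog xs (Suc m - 0) + (\<Sum>i\<le>m. x ^ Suc i * complete_homog xs (Suc m - Suc i))"
    by (simp only: complete_homog.simps sum.atMost_Suc_shift)
  then show ?thesis
    by (simp add: sum_distrib_left mult.assoc complete_homog.simps)
qed

lemma complete_homog_Cons_diff:
  "complete_homog (a # xs) (Suc m) - complete_homog (c # xs) (Suc m)
     = (a - c) * complete_homog (a # c # xs) m"
proof (induction m)
  case 0
  show ?case
    by (simp add: complete_homog_Cons_Suc[of _ _ 0] algebra_simps)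
next
  case (Suc m)
  have "complete_homog (a # xs) (Suc (Suc m)) - complete_homog (c # xs) (Suc (Suc m))
      = a * (complete_homog (a # xs) (Suc m) - complete_homog (c # xs) (Suc m))
        + (a - c) * complete_homog (c # xs) (Suc m)"
    by (simp only: complete_homog_Cons_Suc) (simp add: algebra_simps)
  also have "\<dots> = (a - c) * (complete_homog (c # xs) (Suc m) + a * complete_homog (a # c # xs) m)"
    by (simp only: Suc) (simp add: algebra_simps)
  also have "\<dots> = (a - c) * complete_homog (a # c # xs) (Suc m)"
    by (simp only: complete_homog_Cons_Suc[of a "c # xs"])
  finally show ?case .
qed

(* Over a domain, symmetry follows from complete_homog_Cons_diff applied in both orders. *)
lemma complete_homog_swap:
  fixes a c :: "'a::idom"
  shows "complete_homog (a # c # xs) m = complete_homog (c # a # xs) m"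
proof (cases "a = c")
  case False
  have "(a - c) * complete_homog (a # c # xs) m = - ((c - a) * complete_homog (c # a # xs) m)"
    using complete_homog_Cons_diff[of a xs m c] complete_homog_Cons_diff[of c xs m a]
    by (metis minus_diff_eq)
  also have "\<dots> = (a - c) * complete_homog (c # a # xs) m"
    by (simp add: algebra_simps)
  finally show ?thesis
    using False by simp
qed simp

lemma complete_homog_move_to_front:
  fixes a :: "'a::idom"
  shows "complete_homog (xs @ a # ys) m = complete_homog (a # xs @ ys) m"
proof (induction xs arbitrary: m)
  case (Cons x xs)
  have "complete_homog (x # xs @ a # ys) m = complete_homog (x # a # xs @ ys) m"
    using Cons by (simp add: complete_homog.simps)
  also have "\<dots> = complete_homog (a # x # xs @ ys) m"
    by (rule complete_homog_swap)
  finally show ?case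
    by simp
qed simp

lemma complete_homog_mset:
  fixes xs ys :: "'a::idom list"
  assumes "mset xs = mset ys"
  shows "complete_homog xs m = complete_homog ys m"
  using assms
proof (induction xs arbitrary: ys m)
  case (Cons x xs)
  then have "x \<in> set ys"
    using mset_eq_setD by fastforce
  then obtain ys1 ys2 where ys: "ys = ys1 @ x # ys2"
    by (meson split_list)
  then have "mset xs = mset (ys1 @ ys2)"
    using Cons.prems by simp
  then have "complete_homog (x # xs) m = complete_homog (x # ys1 @ ys2) m"
    by (simp add: complete_homog.simps Cons.IH[of "ys1 @ ys2"])
  also have "\<dots> = complete_homog ys m"
    by (simp add: ys complete_homog_move_to_front)
  finally show ?case .
qed simp

lemma complete_homog_Cons_replicate_0:
  fixes x :: "'a::comm_ring_1"
  shows "complete_homog (x # replicate n 0) m = x ^ m"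
proof -
  have zeros: "complete_homog (replicate n (0::'a)) m = complete_homog [] m" for m :: nat
  proof (induction n arbitrary: m)
    case (Suc n)
    have "complete_homog ((0::'a) # replicate n 0) m = (\<Sum>i\<le>m. if i = 0 then complete_homog [] m else 0)"
      unfolding complete_homog.simps(2) by (rule sum.cong) (auto simp: Suc.IH power_0_left)
    then show ?case
      by simp
  qed simp
  show ?thesis
    using complete_homog_singleton[of x m] by (simp add: complete_homog.simps zeros)
qed

section \<open>Divided differences\<close>

(* For a list xs of k + 1 nodes, the divided difference of y |-> sum_(j <= d) b j * y ^ j at xs. *)
definition divided_diff :: "(nat \<Rightarrow> 'a::comm_ring_1) \<Rightarrow> nat \<Rightarrow> nat \<Rightarrow> 'a list \<Rightarrow> 'a" where
  "divided_diff b d k xs = (\<Sum>j=k..d. b j * complete_homog xs (j - k))"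

lemma divided_diff_singleton: "divided_diff b d 0 [y] = (\<Sum>j\<le>d. b j * y ^ j)"
  by (simp add: divided_diff_def atLeast0AtMost)

lemma divided_diff_Cons_diff:
  "divided_diff b d k (a # xs) - divided_diff b d k (c # xs)
     = (a - c) * divided_diff b d (Suc k) (a # c # xs)"
proof (cases "k \<le> d")
  case True
  have "divided_diff b d k (a # xs) - divided_diff b d k (c # xs)
      = (\<Sum>j=k..d. b j * (complete_homog (a # xs) (j - k) - complete_homog (c # xs) (j - k)))"
    by (simp add: divided_diff_def sum_subtractf right_diff_distrib)
  also have "\<dots> = (\<Sum>j=Suc k..d. b j * (complete_homog (a # xs) (j - k) - complete_homog (c # xs) (j - k)))"
    using True by (simp add: sum.atLeast_Suc_atMost)
  also have "\<dots> = (\<Sum>j=Suc k..d. (a - c) * (b j * complete_homog (a # c # xs) (j - Suc k)))"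
  proof (rule sum.cong)
    fix j assume "j \<in> {Suc k..d}"
    then have "j - k = Suc (j - Suc k)"
      by (simp add: Suc_diff_Suc)
    then show "b j * (complete_homog (a # xs) (j - k) - complete_homog (c # xs) (j - k))
        = (a - c) * (b j * complete_homog (a # c # xs) (j - Suc k))"
      by (simp only: complete_homog_Cons_diff) (simp add: algebra_simps)
  qed simp
  finally show ?thesis
    by (simp add: divided_diff_def sum_distrib_left)
qed (simp add: divided_diff_def)

lemma divided_diff_mset:
  fixes xs ys :: "'a::idom list"
  assumes "mset xs = mset ys"
  shows "divided_diff b d k xs = divided_diff b d k ys"
  by (simp add: divided_diff_def complete_homog_mset[OF assms])

lemma divided_diff_eq_0_if_roots:
  fixes b :: "nat \<Rightarrow> 'a::idom"
  assumes "length xs = Suc k" and "distinct xs"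
    and "\<And>y. y \<in> set xs \<Longrightarrow> (\<Sum>j\<le>d. b j * y ^ j) = 0"
  shows "divided_diff b d k xs = 0"
  using assms
proof (induction k arbitrary: xs)
  case 0
  then obtain y where "xs = [y]"
    by (auto simp: length_Suc_conv)
  with 0 show ?case
    by (simp add: divided_diff_singleton)
next
  case (Suc k)
  then obtain a c ys where xs: "xs = a # c # ys"
    by (auto simp: length_Suc_conv)
  have "divided_diff b d k (a # ys) = 0" and "divided_diff b d k (c # ys) = 0"
    by (rule Suc.IH; use Suc.prems xs in auto)+
  then have "(a - c) * divided_diff b d (Suc k) (a # c # ys) = 0"
    by (simp flip: divided_diff_Cons_diff)
  then show ?case
    using Suc.prems(2) xs by simp
qed

definition divided_diff_poly :: "(nat \<Rightarrow> 'a::comm_ring_1) \<Rightarrow> nat \<Rightarrow> nat \<Rightarrow> 'a list \<Rightarrow> 'a poly" where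
  "divided_diff_poly b d k xs = (\<Sum>j=k..d. \<Sum>i\<le>j - k. monom (b j * complete_homog xs (j - k - i)) i)"

lemma poly_divided_diff_poly: "poly (divided_diff_poly b d k xs) y = divided_diff b d k (y # xs)"
  by (simp add: divided_diff_poly_def divided_diff_def poly_sum poly_monom complete_homog.simps
      sum_distrib_left mult_ac)

lemma coeff_divided_diff_poly:
  "coeff (divided_diff_poly b d k xs) n
     = (\<Sum>j=k..d. if n \<le> j - k then b j * complete_homog xs (j - k - n) else 0)"
  unfolding divided_diff_poly_def coeff_sum coeff_monom by (intro sum.cong refl) (simp add: sum.delta)

lemma degree_divided_diff_poly: "degree (divided_diff_poly b d k xs) \<le> d - k"
  by (rule degree_le) (auto simp: coeff_divided_diff_poly intro!: sum.neutral)

lemma coeff_divided_diff_poly_top: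
  assumes "k \<le> d"
  shows "coeff (divided_diff_poly b d k xs) (d - k) = b d"
proof -
  have "coeff (divided_diff_poly b d k xs) (d - k) = (\<Sum>j=k..d. if j = d then b d else 0)"
    unfolding coeff_divided_diff_poly by (rule sum.cong) auto
  then show ?thesis
    using assms by simp
qed

(* As a polynomial in y this has degree d - length xs and leading coefficient b d; it vanishes
   at the d - length xs points of R - set xs, so these are all its roots. *)
lemma divided_diff_Cons_eq_0_iff:
  fixes b :: "nat \<Rightarrow> 'a::idom"
  assumes roots: "\<And>y. y \<in> R \<Longrightarrow> (\<Sum>j\<le>d. b j * y ^ j) = 0"
    and R: "finite R" "card R = d" and "b d \<noteq> 0"
    and xs: "distinct xs" "set xs \<subseteq> R"
  shows "divided_diff b d (length xs) (y # xs) = 0 \<longleftrightarrow> y \<in> R - set xs"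
proof -
  define Q where "Q = divided_diff_poly b d (length xs) xs"
  have card_rest: "card (R - set xs) = d - length xs"
    using R xs by (simp add: card_Diff_subset distinct_card)
  have "length xs \<le> d"
    using card_mono[OF R(1) xs(2)] R xs by (simp add: distinct_card)
  then have "coeff Q (d - length xs) \<noteq> 0"
    using \<open>b d \<noteq> 0\<close> by (simp add: Q_def coeff_divided_diff_poly_top)
  then have "Q \<noteq> 0"
    by auto
  have rest_roots: "R - set xs \<subseteq> {y. poly Q y = 0}"
  proof
    fix z assume "z \<in> R - set xs"
    then have "divided_diff b d (length xs) (z # xs) = 0"
      using xs by (intro divided_diff_eq_0_if_roots roots) auto
    then show "z \<in> {y. poly Q y = 0}"
      by (simp add: Q_def poly_divided_diff_poly)
  qed
  have "card {y. poly Q y = 0} \<le> card (R - set xs)"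
    using card_poly_roots_bound[OF \<open>Q \<noteq> 0\<close>] degree_divided_diff_poly[of b d "length xs" xs]
    by (simp add: Q_def card_rest)
  moreover have "card (R - set xs) \<le> card {y. poly Q y = 0}"
    using poly_roots_finite[OF \<open>Q \<noteq> 0\<close>] rest_roots by (rule card_mono)
  ultimately have "R - set xs = {y. poly Q y = 0}"
    using poly_roots_finite[OF \<open>Q \<noteq> 0\<close>] rest_roots by (intro card_subset_eq) simp_all
  then show ?thesis
    by (auto simp: Q_def poly_divided_diff_poly)
qed

lemma bij_betw_if_divided_diffs_eq_0:
  fixes b :: "nat \<Rightarrow> 'a::idom"
  assumes roots: "\<And>y. (\<Sum>j\<le>d. b j * y ^ j) = 0 \<longleftrightarrow> y \<in> R"
    and R: "finite R" "card R = d" and "b d \<noteq> 0"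
    and vanish: "\<forall>k\<in>{1..d}. divided_diff b d (k - 1) (map x (rev [1..<k + 1])) = 0"
  shows "bij_betw x {1..d} R"
proof -
  have "inj_on x {1..k} \<and> x ` {1..k} \<subseteq> R" if "k \<le> d" for k
    using that
  proof (induction k)
    case (Suc k)
    define xs where "xs = map x (rev [1..<k + 1])"
    have xs: "distinct xs" "set xs = x ` {1..k}" "length xs = k"
      using Suc by (simp_all add: xs_def distinct_map atLeastLessThanSuc_atLeastAtMost)
    have "Suc k \<in> {1..d}"
      using Suc.prems by simp
    then have "divided_diff b d (Suc k - 1) (map x (rev [1..<Suc k + 1])) = 0"
      using vanish by blast
    then have "divided_diff b d (length xs) (x (Suc k) # xs) = 0"
      by (simp add: xs_def upt_Suc_append)
    then have "x (Suc k) \<in> R - x ` {1..k}"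
      using divided_diff_Cons_eq_0_iff[where R = R and xs = xs and y = "x (Suc k)"]
        roots R \<open>b d \<noteq> 0\<close> xs Suc
      by auto
    then show ?case
      using Suc by (simp add: atLeastAtMostSuc_conv inj_on_insert)
  qed simp
  then have "inj_on x {1..d}" and "x ` {1..d} \<subseteq> R"
    by auto
  moreover have "card (x ` {1..d}) = card R"
    using \<open>inj_on x {1..d}\<close> R by (simp add: card_image)
  ultimately show "bij_betw x {1..d} R"
    using R(1) by (simp add: bij_betw_def card_subset_eq)
qed

lemma divided_diffs_eq_0_if_bij_betw:
  fixes b :: "nat \<Rightarrow> 'a::idom"
  assumes roots: "\<And>y. y \<in> R \<Longrightarrow> (\<Sum>j\<le>d. b j * y ^ j) = 0"
    and "bij_betw x {1..d} R"
  shows "\<forall>k\<in>{1..d}. divided_diff b d (k - 1) (map x (rev [1..<k + 1])) = 0"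
proof
  fix k assume k: "k \<in> {1..d}"
  have "inj_on x {1..d}" and "x ` {1..d} = R"
    using \<open>bij_betw x {1..d} R\<close> by (auto simp: bij_betw_def)
  then have "inj_on x {1..k}"
    using k by (auto intro: inj_on_subset)
  with k show "divided_diff b d (k - 1) (map x (rev [1..<k + 1])) = 0"
    using \<open>x ` {1..d} = R\<close> roots
    by (intro divided_diff_eq_0_if_roots)
      (auto simp: distinct_map atLeastLessThanSuc_atLeastAtMost)
qed

lemma bij_betw_iff_permutes:
  assumes u: "bij_betw u S T"
  shows "bij_betw x S T \<longleftrightarrow> (\<exists>\<pi>. \<pi> permutes S \<and> (\<forall>a\<in>S. x a = u (\<pi> a)))"
proof
  assume x: "bij_betw x S T"
  define \<pi> where "\<pi> a = (if a \<in> S then inv_into S u (x a) else a)" for a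
  have "bij_betw (inv_into S u \<circ> x) S S"
    using x bij_betw_inv_into[OF u] by (rule bij_betw_trans)
  then have "bij_betw \<pi> S S"
    by (rule bij_betw_cong[THEN iffD1, rotated]) (simp add: \<pi>_def)
  then have "\<pi> permutes S"
    by (rule bij_imp_permutes) (simp add: \<pi>_def)
  moreover have "x a = u (\<pi> a)" if "a \<in> S" for a
    using that x u by (auto simp: \<pi>_def bij_betw_def f_inv_into_f)
  ultimately show "\<exists>\<pi>. \<pi> permutes S \<and> (\<forall>a\<in>S. x a = u (\<pi> a))"
    by blast
next
  assume "\<exists>\<pi>. \<pi> permutes S \<and> (\<forall>a\<in>S. x a = u (\<pi> a))"
  then obtain \<pi> where \<pi>: "\<pi> permutes S" and x: "\<And>a. a \<in> S \<Longrightarrow> x a = u (\<pi> a)"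
    by blast
  have "bij_betw (u \<circ> \<pi>) S T"
    using permutes_imp_bij[OF \<pi>] u by (rule bij_betw_trans)
  then show "bij_betw x S T"
    by (rule bij_betw_cong[THEN iffD1, rotated]) (simp add: x)
qed

section \<open>Evaluation of multivariate polynomials\<close>

locale comm_ring_hom =
  fixes hom :: "'a::comm_ring_1 \<Rightarrow> 'b::comm_ring_1"
  assumes hom_1 [simp]: "hom 1 = 1"
    and hom_add [simp]: "hom (x + y) = hom x + hom y"
    and hom_mult [simp]: "hom (x * y) = hom x * hom y"
begin

lemma hom_0 [simp]: "hom 0 = 0"
  using hom_add[of 0 0] by simp

lemma hom_uminus [simp]: "hom (- x) = - hom x"
  using hom_add[of "- x" x] by (simp add: eq_neg_iff_add_eq_0)

lemma hom_diff [simp]: "hom (x - y) = hom x - hom y"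
  using hom_add[of x "- y"] by simp

lemma hom_sum [simp]: "hom (sum f S) = (\<Sum>a\<in>S. hom (f a))"
  by (induction S rule: infinite_finite_induct) simp_all

lemma hom_power [simp]: "hom (x ^ n) = hom x ^ n"
  by (induction n) simp_all

lemma hom_complete_homog [simp]: "hom (complete_homog xs m) = complete_homog (map hom xs) m"
  by (induction xs arbitrary: m) (simp_all add: complete_homog.simps)

lemma hom_divided_diff [simp]:
  "hom (divided_diff b d k xs) = divided_diff (\<lambda>j. hom (b j)) d k (map hom xs)"
  by (simp add: divided_diff_def)

end

(* Poly_Mapping makes mpoly an integral domain, as needed to cancel the factor
   x_(k+2) - x_(k+1) in the recursion of PhiF, only for linearly ordered variables. *)
instance var :: countable
  by countable_datatype

instantiation var :: linorder
begin

definition less_eq_var :: "var \<Rightarrow> var \<Rightarrow> bool" where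
  "less_eq_var v w \<longleftrightarrow> to_nat v \<le> to_nat w"

definition less_var :: "var \<Rightarrow> var \<Rightarrow> bool" where
  "less_var v w \<longleftrightarrow> to_nat v < to_nat w"

instance
  by standard (auto simp: less_eq_var_def less_var_def)

end

definition monomial_eval :: "(var \<Rightarrow> 'b::comm_ring_1) \<Rightarrow> (var \<Rightarrow>\<^sub>0 nat) \<Rightarrow> 'b" where
  "monomial_eval \<sigma> m = (\<Prod>v\<in>Poly_Mapping.keys m. \<sigma> v ^ Poly_Mapping.lookup m v)"

definition mpoly_eval :: "(complex \<Rightarrow> 'b::comm_ring_1) \<Rightarrow> (var \<Rightarrow> 'b) \<Rightarrow> mpoly \<Rightarrow> 'b" where
  "mpoly_eval h \<sigma> f =
     (\<Sum>m\<in>Poly_Mapping.keys f. h (Poly_Mapping.lookup f m) * monomial_eval \<sigma> m)"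

lemma psubst_eq_mpoly_eval: "psubst \<sigma> = mpoly_eval Const \<sigma>"
  by (simp add: fun_eq_iff psubst_def mpoly_eval_def monomial_eval_def)

lemma peval_eq_mpoly_eval: "peval \<sigma> = mpoly_eval (\<lambda>c. c) \<sigma>"
  by (simp add: fun_eq_iff peval_def mpoly_eval_def monomial_eval_def)

lemma monomial_eval_add: "monomial_eval \<sigma> (m + m') = monomial_eval \<sigma> m * monomial_eval \<sigma> m'"
proof -
  let ?K = "Poly_Mapping.keys m \<union> Poly_Mapping.keys m'"
  have on_K: "monomial_eval \<sigma> n = (\<Prod>v\<in>?K. \<sigma> v ^ Poly_Mapping.lookup n v)"
    if "Poly_Mapping.keys n \<subseteq> ?K" for n
    unfolding monomial_eval_def
    by (rule prod.mono_neutral_left) (use that in \<open>auto simp: in_keys_iff\<close>)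
  show ?thesis
    using keys_add[of m m']
    by (simp add: on_K lookup_add power_add prod.distrib)
qed

lemma mpoly_expand:
  "f = (\<Sum>m\<in>Poly_Mapping.keys f. Poly_Mapping.single m (Poly_Mapping.lookup f m))"
proof (rule poly_mapping_eqI)
  fix k
  show "Poly_Mapping.lookup f k
      = Poly_Mapping.lookup (\<Sum>m\<in>Poly_Mapping.keys f. Poly_Mapping.single m (Poly_Mapping.lookup f m)) k"
    by (cases "k \<in> Poly_Mapping.keys f") (simp_all add: lookup_sum lookup_single when_def in_keys_iff)
qed

context
  fixes h :: "complex \<Rightarrow> 'b::comm_ring_1"
  assumes h: "comm_ring_hom h"
begin

interpretation h: comm_ring_hom h
  by (fact h)

lemma mpoly_eval_single:
  "mpoly_eval h \<sigma> (Poly_Mapping.single m c) = h c * monomial_eval \<sigma> m"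
  by (cases "c = 0") (simp_all add: mpoly_eval_def)

lemma mpoly_eval_add: "mpoly_eval h \<sigma> (f + g) = mpoly_eval h \<sigma> f + mpoly_eval h \<sigma> g"
  unfolding mpoly_eval_def by (rule setsum_keys_plus_distrib) (simp_all add: distrib_right)

lemma mpoly_eval_0: "mpoly_eval h \<sigma> 0 = 0"
  by (simp add: mpoly_eval_def)

lemma mpoly_eval_sum: "mpoly_eval h \<sigma> (sum f S) = (\<Sum>a\<in>S. mpoly_eval h \<sigma> (f a))"
  by (induction S rule: infinite_finite_induct) (simp_all add: mpoly_eval_add mpoly_eval_0)

lemma mpoly_eval_mult: "mpoly_eval h \<sigma> (f * g) = mpoly_eval h \<sigma> f * mpoly_eval h \<sigma> g"
proof -
  have "f * g = (\<Sum>m\<in>Poly_Mapping.keys f. \<Sum>n\<in>Poly_Mapping.keys g.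
      Poly_Mapping.single (m + n) (Poly_Mapping.lookup f m * Poly_Mapping.lookup g n))"
    by (subst mpoly_expand[of f], subst mpoly_expand[of g])
      (simp add: sum_product mult_single)
  then have "mpoly_eval h \<sigma> (f * g) = (\<Sum>m\<in>Poly_Mapping.keys f. \<Sum>n\<in>Poly_Mapping.keys g.
      h (Poly_Mapping.lookup f m * Poly_Mapping.lookup g n) * monomial_eval \<sigma> (m + n))"
    by (simp add: mpoly_eval_sum mpoly_eval_single)
  also have "\<dots> = mpoly_eval h \<sigma> f * mpoly_eval h \<sigma> g"
    by (simp add: mpoly_eval_def monomial_eval_add sum_product mult_ac)
  finally show ?thesis .
qed

lemma comm_ring_hom_mpoly_eval: "comm_ring_hom (mpoly_eval h \<sigma>)"
proof
  show "mpoly_eval h \<sigma> 1 = 1"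
    using mpoly_eval_single[of \<sigma> 0 1] by (simp add: monomial_eval_def)
qed (simp_all add: mpoly_eval_add mpoly_eval_mult)

lemma mpoly_eval_Var: "mpoly_eval h \<sigma> (Var v) = \<sigma> v"
  by (simp add: Var_def mpoly_eval_single monomial_eval_def)

end

lemma comm_ring_hom_Const: "comm_ring_hom Const"
  by standard (simp_all add: Const_def single_add mult_single)

lemma comm_ring_hom_id: "comm_ring_hom (\<lambda>c. c)"
  by standard simp_all

interpretation psubst: comm_ring_hom "psubst \<sigma>" for \<sigma>
  unfolding psubst_eq_mpoly_eval by (rule comm_ring_hom_mpoly_eval[OF comm_ring_hom_Const])

interpretation peval: comm_ring_hom "peval \<sigma>" for \<sigma>
  unfolding peval_eq_mpoly_eval by (rule comm_ring_hom_mpoly_eval[OF comm_ring_hom_id])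

lemma psubst_Var [simp]: "psubst \<sigma> (Var v) = \<sigma> v"
  by (simp add: psubst_eq_mpoly_eval mpoly_eval_Var[OF comm_ring_hom_Const])

lemma peval_Var [simp]: "peval \<sigma> (Var v) = \<sigma> v"
  by (simp add: peval_eq_mpoly_eval mpoly_eval_Var[OF comm_ring_hom_id])

section \<open>A closed form for \<open>Phi_k\<close>\<close>

definition phi_coeff :: "nat \<Rightarrow> (var \<Rightarrow> 'a::comm_ring_1) \<Rightarrow> 'a \<Rightarrow> nat \<Rightarrow> 'a" where
  "phi_coeff d a x0 j = (\<Sum>i\<le>d. a (acoef i j) * x0 ^ i)"

lemma phi_coeff_cong:
  "(\<And>i j. a (acoef i j) = a' (acoef i j)) \<Longrightarrow> x0 = x0' \<Longrightarrow> phi_coeff d a x0 = phi_coeff d a' x0'"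
  by (simp add: phi_coeff_def fun_eq_iff)

lemma (in comm_ring_hom) hom_phi_coeff [simp]:
  "hom (phi_coeff d a x0 j) = phi_coeff d (\<lambda>v. hom (a v)) (hom x0) j"
  by (simp add: phi_coeff_def)

lemma PhiPoly_eq_sum_phi_coeff: "PhiPoly d p y = (\<Sum>j\<le>d. phi_coeff d Var p j * y ^ j)"
  unfolding PhiPoly_def phi_coeff_def by (subst sum.swap) (simp add: sum_distrib_right)

lemma poly_PhiUni: "poly (PhiUni d c u0) y = (\<Sum>j\<le>d. phi_coeff d c u0 j * y ^ j)"
  by (simp add: PhiUni_def phi_coeff_def poly_sum poly_monom)

lemma coeff_PhiUni: "coeff (PhiUni d c u0) n = (if n \<le> d then phi_coeff d c u0 n else 0)"
  by (simp add: PhiUni_def phi_coeff_def coeff_sum)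

definition PhiF_closed :: "nat \<Rightarrow> nat \<Rightarrow> mpoly" where
  "PhiF_closed d k = (-1) ^ k * divided_diff (phi_coeff d Var (Var (X 0))) d k
                                  (map (\<lambda>i. Var (X i)) (rev [1..<k + 2]))"

lemma PhiF_closed_recurrence:
  "PhiF_closed d (Suc k) * (Var (X (k + 2)) - Var (X (k + 1)))
     = PhiF_closed d k - psubst (Var(X (k + 1) := Var (X (k + 2)))) (PhiF_closed d k)"
proof -
  define b where "b = phi_coeff d Var (Var (X 0))"
  define xs where "xs = map (\<lambda>i. Var (X i)) (rev [1..<k + 1])"
  define \<sigma> where "\<sigma> = Var(X (k + 1) := Var (X (k + 2)))"
  have closed_k: "PhiF_closed d k = (-1) ^ k * divided_diff b d k (Var (X (k + 1)) # xs)"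
    by (simp add: PhiF_closed_def b_def xs_def upt_Suc_append)
  have "map (\<lambda>i. \<sigma> (X i)) (rev [1..<k + 1]) = xs"
    by (auto simp: xs_def \<sigma>_def)
  moreover have "phi_coeff d \<sigma> (\<sigma> (X 0)) = b"
    unfolding b_def by (rule phi_coeff_cong) (simp_all add: \<sigma>_def acoef_def)
  moreover have "\<sigma> (X (k + 1)) = Var (X (k + 2))"
    by (simp add: \<sigma>_def)
  ultimately have psubst_closed_k:
    "psubst \<sigma> (PhiF_closed d k) = (-1) ^ k * divided_diff b d k (Var (X (k + 2)) # xs)"
    unfolding PhiF_closed_def by (simp add: upt_Suc_append comp_def)
  have "PhiF_closed d k - psubst \<sigma> (PhiF_closed d k) = (-1) ^ k * ((Var (X (k + 1)) - Var (X (k + 2)))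
      * divided_diff b d (Suc k) (Var (X (k + 1)) # Var (X (k + 2)) # xs))"
    unfolding psubst_closed_k unfolding closed_k
    by (simp only: right_diff_distrib[symmetric] divided_diff_Cons_diff)
  also have "\<dots> = PhiF_closed d (Suc k) * (Var (X (k + 2)) - Var (X (k + 1)))"
  proof -
    have "divided_diff b d (Suc k) (Var (X (k + 1)) # Var (X (k + 2)) # xs)
        = divided_diff b d (Suc k) (map (\<lambda>i. Var (X i)) (rev [1..<Suc k + 2]))"
      by (rule divided_diff_mset) (simp add: xs_def upt_Suc_append add_mset_commute)
    then show ?thesis
      by (simp add: PhiF_closed_def b_def algebra_simps)
  qed
  finally show ?thesis
    unfolding \<sigma>_def by (rule sym)
qed

lemma PhiF_eq_PhiF_closed: "PhiF d k = PhiF_closed d k"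
proof (induction k)
  case 0
  show ?case
    by (simp add: PhiF_closed_def PhiPoly_eq_sum_phi_coeff divided_diff_singleton upt_Suc_append)
next
  case (Suc k)
  have "peval (\<lambda>v. if v = X (k + 2) then 1 else 0) (Var (X (k + 2)) - Var (X (k + 1))) = 1"
    by simp
  then have "Var (X (k + 2)) - Var (X (k + 1)) \<noteq> 0"
    by (metis peval.hom_0 zero_neq_one)
  then show ?case
    using PhiF_closed_recurrence[of d k, symmetric] by (simp add: Suc.IH)
qed

lemma psubst_PhiF:
  assumes "\<And>i j. \<sigma> (acoef i j) = Var (acoef i j)"
  shows "psubst \<sigma> (PhiF d k) = (-1) ^ k * divided_diff (phi_coeff d Var (\<sigma> (X 0))) d k
                                    (map (\<lambda>i. \<sigma> (X i)) (rev [1..<k + 2]))"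
proof -
  have "phi_coeff d \<sigma> x0 = phi_coeff d Var x0" for x0
    by (rule phi_coeff_cong) (simp_all add: assms)
  then show ?thesis
    unfolding PhiF_eq_PhiF_closed PhiF_closed_def by (simp add: comp_def)
qed

lemma peval_PhiF:
  "peval \<sigma> (PhiF d k) = (-1) ^ k * divided_diff (phi_coeff d \<sigma> (\<sigma> (X 0))) d k
                           (map (\<lambda>i. \<sigma> (X i)) (rev [1..<k + 2]))"
  unfolding PhiF_eq_PhiF_closed PhiF_closed_def by (simp add: comp_def)

lemma PhiF_permute:
  assumes \<pi>: "\<pi> permutes {1..Suc k}"
  shows "psubst (\<lambda>v. case v of A a b \<Rightarrow> Var (A a b) | X i \<Rightarrow> Var (X (\<pi> i))) (PhiF d k) = PhiF d k"
proof -
  define xs where "xs = rev [1..<k + 2]"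
  have "\<pi> 0 = 0"
    using permutes_not_in[OF \<pi>] by simp
  have "mset xs = mset_set {1..Suc k}"
    by (simp add: xs_def atLeastLessThanSuc_atLeastAtMost)
  then have "mset (map \<pi> xs) = mset xs"
    using permutes_image_mset[OF \<pi>] by simp
  then have nodes: "mset (map (\<lambda>i. Var (X (\<pi> i))) xs) = mset (map (\<lambda>i. Var (X i)) xs)"
    by (metis (no_types, lifting) map_map mset_map o_apply map_eq_conv)
  have "psubst (\<lambda>v. case v of A a b \<Rightarrow> Var (A a b) | X i \<Rightarrow> Var (X (\<pi> i))) (PhiF d k)
      = (-1) ^ k * divided_diff (phi_coeff d Var (Var (X 0))) d k (map (\<lambda>i. Var (X (\<pi> i))) xs)"
    by (subst psubst_PhiF) (simp_all add: acoef_def \<open>\<pi> 0 = 0\<close> xs_def)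
  also have "\<dots> = (-1) ^ k * divided_diff (phi_coeff d Var (Var (X 0))) d k (map (\<lambda>i. Var (X i)) xs)"
    using divided_diff_mset[OF nodes] by simp
  also have "\<dots> = PhiF d k"
    by (simp add: PhiF_eq_PhiF_closed PhiF_closed_def xs_def)
  finally show ?thesis .
qed

section \<open>The degree of \<open>Phi_k\<close>\<close>

lemma xdegm_add: "xdegm (m + m') = xdegm m + xdegm m'"
proof -
  let ?K = "Poly_Mapping.keys m \<union> Poly_Mapping.keys m'"
  have on_K: "xdegm n = (\<Sum>v\<in>?K. case v of X _ \<Rightarrow> Poly_Mapping.lookup n v | A _ _ \<Rightarrow> 0)"
    if "Poly_Mapping.keys n \<subseteq> ?K" for n
    unfolding xdegm_def
    by (rule sum.mono_neutral_left) (use that in \<open>auto simp: in_keys_iff split: var.split\<close>)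
  have "xdegm (m + m') = (\<Sum>v\<in>?K. case v of X _ \<Rightarrow> Poly_Mapping.lookup (m + m') v | A _ _ \<Rightarrow> 0)"
    by (rule on_K[OF keys_add])
  also have "\<dots> = (\<Sum>v\<in>?K. (case v of X _ \<Rightarrow> Poly_Mapping.lookup m v | A _ _ \<Rightarrow> 0)
                        + (case v of X _ \<Rightarrow> Poly_Mapping.lookup m' v | A _ _ \<Rightarrow> 0))"
    by (rule sum.cong) (auto simp: lookup_add split: var.split)
  also have "\<dots> = xdegm m + xdegm m'"
    by (simp add: sum.distrib on_K)
  finally show ?thesis .
qed

definition x_homogeneous :: "nat \<Rightarrow> mpoly \<Rightarrow> bool" where
  "x_homogeneous D p \<longleftrightarrow> (\<forall>m\<in>Poly_Mapping.keys p. xdegm m = D)"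

lemma x_homogeneous_sum:
  "(\<And>a. a \<in> S \<Longrightarrow> x_homogeneous D (f a)) \<Longrightarrow> x_homogeneous D (sum f S)"
  unfolding x_homogeneous_def using keys_sum[of f S] by blast

lemma x_homogeneous_mult:
  "x_homogeneous D p \<Longrightarrow> x_homogeneous D' q \<Longrightarrow> x_homogeneous (D + D') (p * q)"
  unfolding x_homogeneous_def using keys_mult[of p q] by (force simp: xdegm_add)

lemma x_homogeneous_1: "x_homogeneous 0 1"
  by (simp add: x_homogeneous_def xdegm_def)

lemma x_homogeneous_power: "x_homogeneous D p \<Longrightarrow> x_homogeneous (n * D) (p ^ n)"
  by (induction n) (auto simp: x_homogeneous_1 intro: x_homogeneous_mult)

lemma x_homogeneous_Var_X: "x_homogeneous 1 (Var (X i))"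
  by (simp add: x_homogeneous_def Var_def xdegm_def)

lemma x_homogeneous_Var_A: "x_homogeneous 0 (Var (A a b))"
  by (simp add: x_homogeneous_def Var_def xdegm_def)

lemma x_homogeneous_complete_homog:
  "(\<And>x. x \<in> set xs \<Longrightarrow> x_homogeneous 1 x) \<Longrightarrow> x_homogeneous m (complete_homog xs m)"
proof (induction xs arbitrary: m)
  case Nil
  then show ?case
    by (simp add: x_homogeneous_def xdegm_def)
next
  case (Cons x xs)
  show ?case
    unfolding complete_homog.simps
  proof (rule x_homogeneous_sum)
    fix i assume "i \<in> {..m}"
    have "x_homogeneous (i * 1) (x ^ i)"
      using Cons.prems by (intro x_homogeneous_power) simp
    moreover have "x_homogeneous (m - i) (complete_homog xs (m - i))"
      using Cons.prems by (intro Cons.IH) simp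
    ultimately show "x_homogeneous m (x ^ i * complete_homog xs (m - i))"
      using x_homogeneous_mult \<open>i \<in> {..m}\<close> by fastforce
  qed
qed

lemma xdeg_sum_homogeneous:
  assumes "finite I" and "p \<in> I" and "t p \<noteq> 0"
    and homog: "\<And>q. q \<in> I \<Longrightarrow> x_homogeneous (deg q) (t q)"
    and lower: "\<And>q. q \<in> I - {p} \<Longrightarrow> deg q < deg p"
  shows "xdeg (\<Sum>q\<in>I. t q) = deg p"
proof -
  define R where "R = (\<Sum>q\<in>I - {p}. t q)"
  have sum: "(\<Sum>q\<in>I. t q) = t p + R"
    unfolding R_def using assms(1,2) by (rule sum.remove)
  have R_low: "xdegm m < deg p" if "m \<in> Poly_Mapping.keys R" for m
    using that keys_sum[of t "I - {p}"] homog lower unfolding R_def x_homogeneous_def by fastforce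
  obtain m0 where m0: "m0 \<in> Poly_Mapping.keys (t p)"
    using \<open>t p \<noteq> 0\<close> by (metis all_not_in_conv keys_eq_empty)
  then have deg_m0: "xdegm m0 = deg p"
    using homog[OF \<open>p \<in> I\<close>] by (simp add: x_homogeneous_def)
  then have "Poly_Mapping.lookup R m0 = 0"
    using R_low[of m0] by (auto simp: in_keys_iff)
  then have "m0 \<in> Poly_Mapping.keys (t p + R)"
    using m0 by (simp add: in_keys_iff lookup_add)
  then have "deg p \<in> xdegm ` Poly_Mapping.keys (t p + R)"
    using deg_m0 by (rule rev_image_eqI[OF _ sym])
  moreover have "xdegm m \<le> deg p" if "m \<in> Poly_Mapping.keys (t p + R)" for m
    using that keys_add[of "t p" R] R_low homog[OF \<open>p \<in> I\<close>]
    by (fastforce simp: x_homogeneous_def)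
  ultimately show ?thesis
    unfolding sum xdeg_def by (intro Max_eqI) auto
qed

lemma Var_neq_0 [simp]: "Var v \<noteq> 0"
  using peval_Var[of "\<lambda>_. 1 :: complex" v] by (metis peval.hom_0 zero_neq_one)

lemma complete_homog_nodes_neq_0: "complete_homog (map (\<lambda>i. Var (X i)) (rev [1..<k + 2])) m \<noteq> 0"
proof -
  define \<sigma> where "\<sigma> v = (if v = X (k + 1) then 1 else 0 :: complex)" for v
  have "map (\<lambda>i. \<sigma> (X i)) (rev [1..<k + 1]) = replicate k 0"
    by (auto simp: \<sigma>_def intro: replicate_eqI)
  then have "peval \<sigma> (complete_homog (map (\<lambda>i. Var (X i)) (rev [1..<k + 2])) m) = 1"
    by (simp add: comp_def upt_Suc_append complete_homog_Cons_replicate_0 \<sigma>_def)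
  then show ?thesis
    by (metis peval.hom_0 zero_neq_one)
qed

lemma xdeg_neg_one_power_mult: "xdeg ((-1) ^ k * f) = xdeg f"
  by (cases "even k") (simp_all add: xdeg_def)

lemma xdeg_PhiF:
  assumes "k < d"
  shows "xdeg (PhiF d k) = 2 * d - k"
proof -
  define xs where "xs = map (\<lambda>i. Var (X i)) (rev [1..<k + 2])"
  define t where "t = (\<lambda>(i, j). Var (acoef i j) * Var (X 0) ^ i * complete_homog xs (j - k))"
  have "divided_diff (phi_coeff d Var (Var (X 0))) d k xs = (\<Sum>j=k..d. \<Sum>i\<le>d. t (i, j))"
    by (simp add: divided_diff_def phi_coeff_def t_def sum_distrib_right)
  also have "\<dots> = (\<Sum>q\<in>{..d} \<times> {k..d}. t q)"
    by (subst sum.swap) (simp add: sum.cartesian_product)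
  finally have closed: "PhiF d k = (-1) ^ k * (\<Sum>q\<in>{..d} \<times> {k..d}. t q)"
    by (simp add: PhiF_eq_PhiF_closed PhiF_closed_def xs_def)
  have homog: "x_homogeneous (i + (j - k)) (t (i, j))" for i j
  proof -
    have "x_homogeneous (j - k) (complete_homog xs (j - k))"
      using x_homogeneous_Var_X by (intro x_homogeneous_complete_homog) (auto simp: xs_def)
    then show ?thesis
      using x_homogeneous_mult[OF x_homogeneous_mult[OF x_homogeneous_Var_A
          x_homogeneous_power[OF x_homogeneous_Var_X]]]
      by (simp add: t_def acoef_def)
  qed
  have "t (d, d) \<noteq> 0"
    using complete_homog_nodes_neq_0[of k "d - k"] by (simp add: t_def xs_def)
  then have "xdeg (\<Sum>q\<in>{..d} \<times> {k..d}. t q) = 2 * d - k"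
    using xdeg_sum_homogeneous[where deg = "\<lambda>(i, j). i + (j - k)", of "{..d} \<times> {k..d}" "(d, d)" t]
      homog assms by fastforce
  then show ?thesis
    by (simp add: closed xdeg_neg_one_power_mult)
qed

section \<open>Vanishing on \<open>U(H)\<close> and the solutions of the system\<close>

lemma pvars_0 [simp]: "pvars 0 = {}"
  by (simp add: pvars_def)

lemma pvars_1 [simp]: "pvars 1 = {}"
  by (simp add: pvars_def)

lemma pvars_Var [simp]: "pvars (Var v) = {v}"
  by (simp add: pvars_def Var_def)

lemma pvars_uminus [simp]: "pvars (- p) = pvars p"
  by (simp add: pvars_def)

lemma pvars_sum_subset: "(\<And>a. a \<in> S \<Longrightarrow> pvars (f a) \<subseteq> V) \<Longrightarrow> pvars (sum f S) \<subseteq> V"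
  unfolding pvars_def using keys_sum[of f S] by blast

lemma pvars_mult_subset:
  assumes "pvars p \<subseteq> V" and "pvars q \<subseteq> V"
  shows "pvars (p * q) \<subseteq> V"
proof
  fix v assume "v \<in> pvars (p * q)"
  then obtain m where m: "m \<in> Poly_Mapping.keys (p * q)" "v \<in> Poly_Mapping.keys m"
    by (auto simp: pvars_def)
  then obtain a b where "m = a + b" "a \<in> Poly_Mapping.keys p" "b \<in> Poly_Mapping.keys q"
    using keys_mult[of p q] by blast
  then show "v \<in> V"
    using m(2) keys_add[of a b] assms unfolding pvars_def by blast
qed

lemma pvars_power_subset: "pvars p \<subseteq> V \<Longrightarrow> pvars (p ^ n) \<subseteq> V"
  by (induction n) (simp_all add: pvars_mult_subset)

lemma pvars_complete_homog_subset:
  "(\<And>x. x \<in> set xs \<Longrightarrow> pvars x \<subseteq> V) \<Longrightarrow> pvars (complete_homog xs m) \<subseteq> V"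
proof (induction xs arbitrary: m)
  case (Cons x xs)
  then show ?case
    unfolding complete_homog.simps
    by (intro pvars_sum_subset pvars_mult_subset pvars_power_subset) auto
qed simp

lemma pvars_divided_diff_subset:
  "(\<And>j. j \<le> d \<Longrightarrow> pvars (b j) \<subseteq> V) \<Longrightarrow> (\<And>x. x \<in> set xs \<Longrightarrow> pvars x \<subseteq> V)
    \<Longrightarrow> pvars (divided_diff b d k xs) \<subseteq> V"
  unfolding divided_diff_def
  by (intro pvars_sum_subset pvars_mult_subset pvars_complete_homog_subset) auto

lemma vanI_zclosI:
  assumes "f \<in> polys d n" and "\<And>q. q \<in> S \<Longrightarrow> peval q f = 0"
  shows "f \<in> vanI d n (zclos d n S)"
  using assms by (auto simp: vanI_def zclos_def)

lemma inj_on_X_outside_ZH: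
  assumes "q \<in> WH d n E - ZH d n E"
  shows "inj_on (\<lambda>i. q (X i)) {1..n}"
proof (rule inj_onI, rule ccontr)
  fix a b assume ab: "a \<in> {1..n}" "b \<in> {1..n}" "q (X a) = q (X b)" "a \<noteq> b"
  have "\<exists>i\<in>{1..n}. \<exists>j\<in>{1..n}. i > j \<and> q (X i) = q (X j)"
  proof (cases "a < b")
    case True
    show ?thesis
      by (rule bexI[of _ b], rule bexI[of _ a]) (use ab True in auto)
  next
    case False
    show ?thesis
      by (rule bexI[of _ a], rule bexI[of _ b]) (use ab False in auto)
  qed
  with assms show False
    by (auto simp: ZH_def)
qed

lemma peval_PhiPoly:
  "peval q (PhiPoly d (Var (X a)) (Var (X b)))
     = (\<Sum>j\<le>d. phi_coeff d q (q (X a)) j * q (X b) ^ j)"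
  by (simp add: PhiPoly_eq_sum_phi_coeff)

lemma divided_diff_at_neighbours_eq_0:
  assumes q: "q \<in> WH d n E - ZH d n E"
    and edges_in: "\<And>a b. E a b \<Longrightarrow> a \<in> {1..n} \<and> b \<in> {1..n}"
    and j_inj: "inj_on j (set ys)" and j_nb: "\<And>i. i \<in> set ys \<Longrightarrow> E i0 (j i)"
    and ys: "distinct ys" "length ys = Suc k"
  shows "divided_diff (phi_coeff d q (q (X i0))) d k (map (\<lambda>i. q (X (j i))) ys) = 0"
proof (rule divided_diff_eq_0_if_roots)
  have "j ` set ys \<subseteq> {1..n}"
    using edges_in j_nb by blast
  then have "inj_on ((\<lambda>i. q (X i)) \<circ> j) (set ys)"
    using inj_on_X_outside_ZH[OF q] by (intro comp_inj_on j_inj) (rule inj_on_subset)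
  then show "distinct (map (\<lambda>i. q (X (j i))) ys)"
    using ys by (simp add: distinct_map comp_def)
  show "(\<Sum>jj\<le>d. phi_coeff d q (q (X i0)) jj * y ^ jj) = 0"
    if "y \<in> set (map (\<lambda>i. q (X (j i))) ys)" for y
    using that q j_nb by (auto simp: WH_def simp flip: peval_PhiPoly)
qed (simp add: ys)

lemma PhiF_neighbours_in_vanI_UH:
  assumes edges_in: "\<And>a b. E a b \<Longrightarrow> a \<in> {1..n} \<and> b \<in> {1..n}"
    and i0: "i0 \<in> {1..n}" and "1 \<le> l"
    and j_inj: "inj_on j {1..l}" and j_nb: "\<And>k. k \<in> {1..l} \<Longrightarrow> E i0 (j k)"
  shows "psubst (\<lambda>v. case v of A a b \<Rightarrow> Var (A a b)
                   | X k \<Rightarrow> (if k = 0 then Var (X i0) else Var (X (j k))))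
           (PhiF d (l - 1)) \<in> vanI d n (UH d n E)"
proof -
  define \<tau> where "\<tau> = (\<lambda>v. case v of A a b \<Rightarrow> Var (A a b)
                   | X k \<Rightarrow> (if k = 0 then Var (X i0) else Var (X (j k))))"
  define k where "k = l - 1"
  define ys where "ys = rev [1..<k + 2]"
  define F where "F = (-1) ^ k * divided_diff (phi_coeff d Var (Var (X i0))) d k
                                   (map (\<lambda>i. Var (X (j i))) ys)"
  have ys: "set ys = {1..l}" "length ys = Suc k" "distinct ys"
    using \<open>1 \<le> l\<close> by (auto simp: ys_def k_def)
  have j_range: "j i \<in> {1..n}" if "i \<in> {1..l}" for i
    using edges_in j_nb that by blast
  have "map (\<lambda>i. \<tau> (X i)) ys = map (\<lambda>i. Var (X (j i))) ys"
    using ys(1) by (auto simp: \<tau>_def)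
  moreover have "\<tau> (X 0) = Var (X i0)"
    by (simp add: \<tau>_def)
  moreover have "psubst \<tau> (PhiF d k)
      = (-1) ^ k * divided_diff (phi_coeff d Var (\<tau> (X 0))) d k (map (\<lambda>i. \<tau> (X i)) ys)"
    unfolding ys_def by (rule psubst_PhiF) (simp add: \<tau>_def acoef_def)
  ultimately have "psubst \<tau> (PhiF d (l - 1)) = F"
    by (simp only: F_def k_def)
  moreover have "F \<in> polys d n"
    unfolding polys_def F_def phi_coeff_def mem_Collect_eq
    using i0 j_range ys(1)
    by (intro pvars_mult_subset pvars_power_subset pvars_divided_diff_subset pvars_sum_subset)
      (auto simp: relvars_def acoef_def)
  moreover have "peval q F = 0" if "q \<in> WH d n E - ZH d n E" for q
  proof -
    have "divided_diff (phi_coeff d q (q (X i0))) d k (map (\<lambda>i. q (X (j i))) ys) = 0"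
      by (rule divided_diff_at_neighbours_eq_0[of q d n E]) (use that edges_in j_inj j_nb ys in auto)
    then show ?thesis
      by (simp add: F_def comp_def)
  qed
  ultimately show ?thesis
    unfolding UH_def \<tau>_def[symmetric] by (metis vanI_zclosI)
qed

lemma PhiF_system_solutions_iff:
  fixes u :: "nat \<Rightarrow> complex"
  assumes "PhiUni d c u0 \<noteq> 0" and u_inj: "inj_on u {1..d}"
    and roots: "{y. poly (PhiUni d c u0) y = 0} = u ` {1..d}"
  shows "(\<forall>k\<in>{1..d}. peval (specpt c u0 x) (PhiF d (k - 1)) = 0)
           \<longleftrightarrow> (\<exists>\<pi>. \<pi> permutes {1..d} \<and> (\<forall>k\<in>{1..d}. x k = u (\<pi> k)))"
proof -
  define b where "b = phi_coeff d c u0"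
  have card_roots: "card (u ` {1..d}) = d"
    using u_inj by (simp add: card_image)
  have "d \<le> degree (PhiUni d c u0)"
    using card_poly_roots_bound[OF \<open>PhiUni d c u0 \<noteq> 0\<close>] roots card_roots by simp
  moreover have "degree (PhiUni d c u0) \<le> d"
    by (rule degree_le) (simp add: coeff_PhiUni)
  ultimately have "b d \<noteq> 0"
    using \<open>PhiUni d c u0 \<noteq> 0\<close> by (metis coeff_PhiUni b_def le_antisym leading_coeff_0_iff order_refl)
  have root_iff: "(\<Sum>j\<le>d. b j * y ^ j) = 0 \<longleftrightarrow> y \<in> u ` {1..d}" for y
    using roots by (auto simp: b_def poly_PhiUni)
  have specialize: "peval (specpt c u0 x) (PhiF d (k - 1)) = 0
      \<longleftrightarrow> divided_diff b d (k - 1) (map x (rev [1..<k + 1])) = 0" if "k \<in> {1..d}" for k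
  proof -
    have "phi_coeff d (specpt c u0 x) u0 = b"
      unfolding b_def by (rule phi_coeff_cong) (simp_all add: specpt_def acoef_def)
    moreover have "map (\<lambda>i. specpt c u0 x (X i)) (rev [1..<k - 1 + 2]) = map x (rev [1..<k + 1])"
      using that by (auto simp: specpt_def)
    moreover have "specpt c u0 x (X 0) = u0"
      by (simp add: specpt_def)
    ultimately show ?thesis
      by (simp only: peval_PhiF) simp
  qed
  have "(\<forall>k\<in>{1..d}. peval (specpt c u0 x) (PhiF d (k - 1)) = 0) \<longleftrightarrow> bij_betw x {1..d} (u ` {1..d})"
    using bij_betw_if_divided_diffs_eq_0[OF root_iff _ card_roots \<open>b d \<noteq> 0\<close>]
      divided_diffs_eq_0_if_bij_betw[of "u ` {1..d}" b d x] root_iff specialize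
    by auto
  also have "\<dots> \<longleftrightarrow> (\<exists>\<pi>. \<pi> permutes {1..d} \<and> (\<forall>k\<in>{1..d}. x k = u (\<pi> k)))"
    using u_inj by (intro bij_betw_iff_permutes) (simp add: bij_betw_def)
  finally show ?thesis .
qed

theorem mainTheorem10:
  fixes n d :: nat and E :: "nat \<Rightarrow> nat \<Rightarrow> bool"
    and i0 l :: nat and j :: "nat \<Rightarrow> nat"
  assumes edges_in: "\<And>a b. E a b \<Longrightarrow> a \<in> {1..n} \<and> b \<in> {1..n}"
    and sym: "\<And>a b. E a b \<Longrightarrow> E b a"
    and irrefl: "\<And>a. \<not> E a a"
    and regular: "\<And>a. a \<in> {1..n} \<Longrightarrow> card {b. E a b} = d"
    and connected: "\<And>a b. a \<in> {1..n} \<Longrightarrow> b \<in> {1..n} \<Longrightarrow> E\<^sup>*\<^sup>* a b"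
    and i0: "i0 \<in> {1..n}"
    and l: "1 \<le> l" "l \<le> d"
    and j_inj: "inj_on j {1..l}"
    and j_nb: "\<And>k. k \<in> {1..l} \<Longrightarrow> E i0 (j k)"
  shows
    "psubst (\<lambda>v. case v of A a b \<Rightarrow> Var (A a b)
                   | X k \<Rightarrow> (if k = 0 then Var (X i0) else Var (X (j k))))
        (PhiF d (l - 1)) \<in> vanI d n (UH d n E)
     \<and> (\<forall>l'. 1 \<le> l' \<and> l' \<le> d \<longrightarrow>
          (\<forall>\<pi>. \<pi> permutes {1..l'} \<longrightarrow>
             psubst (\<lambda>v. case v of A a b \<Rightarrow> Var (A a b) | X k \<Rightarrow> Var (X (\<pi> k)))
               (PhiF d (l' - 1)) = PhiF d (l' - 1))
          \<and> xdeg (PhiF d (l' - 1)) = 2 * d - l' + 1)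
     \<and> (\<forall>c u0 (u :: nat \<Rightarrow> complex).
          PhiUni d c u0 \<noteq> 0 \<and> inj_on u {1..d}
          \<and> {y. poly (PhiUni d c u0) y = 0} = u ` {1..d} \<longrightarrow>
          (\<forall>x :: nat \<Rightarrow> complex.
             (\<forall>k\<in>{1..d}. peval (specpt c u0 x) (PhiF d (k - 1)) = 0)
             \<longleftrightarrow> (\<exists>\<pi>. \<pi> permutes {1..d} \<and> (\<forall>k\<in>{1..d}. x k = u (\<pi> k)))))"
  apply (intro conjI allI impI)
  subgoal
    using edges_in i0 l(1) j_inj j_nb by (rule PhiF_neighbours_in_vanI_UH)
  subgoal for l' \<pi>
    by (rule PhiF_permute) simp
  subgoal for l'
    using xdeg_PhiF[of "l' - 1" d] by (auto simp: Suc_diff_le)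
  subgoal for c u0 u x
    by (rule PhiF_system_solutions_iff) simp_all
  done

end
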